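(* For every integer $n\ge 4$, $\mathrm{wdim}_2(K_n\times K_n)=n+\lceil n/3\rceil$.
   Context: $K_n\times K_n$ is the direct product of two complete graphs on $n$ vertices: vertex set $[n]\times[n]$ with $[n]=\{1,\dots,n\}$, and $(i,j)$ adjacent to $(i',j')$ iff $i\ne i'$ and $j\ne j'$. For a connected graph $G$ with distance $d_G$, vertices $x,y,z$ and $S\subseteq V(G)$, let $\Delta_z(x,y)=|d_G(x,z)-d_G(y,z)|$ and $\Delta_S(x,y)=\sum_{z\in S}\Delta_z(x,y)$. A set $S$ is a weak $k$-resolving set if $\Delta_S(x,y)\ge k$ for all distinct $x,y\in V(G)$, and $\mathrm{wdim}_k(G)$ (the weak $k$-metric dimension) is the minimum cardinality of a weak $k$-resolving set of $G$. *)

theory Defs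
  imports Complex_Main
begin

text \<open>A graph is given by a vertex set V and a symmetric irreflexive adjacency relation E.
  walk E V n x y: there is a walk with n edges from x to y, staying in V.\<close>

fun walk :: "('a \<Rightarrow> 'a \<Rightarrow> bool) \<Rightarrow> 'a set \<Rightarrow> nat \<Rightarrow> 'a \<Rightarrow> 'a \<Rightarrow> bool" where
  "walk E V 0 x y \<longleftrightarrow> x \<in> V \<and> x = y"
| "walk E V (Suc n) x y \<longleftrightarrow> x \<in> V \<and> (\<exists>z\<in>V. E x z \<and> walk E V n z y)"

definition gdist :: "('a \<Rightarrow> 'a \<Rightarrow> bool) \<Rightarrow> 'a set \<Rightarrow> 'a \<Rightarrow> 'a \<Rightarrow> nat" where
  "gdist E V x y = (LEAST n. walk E V n x y)"

definition connected_graph :: "('a \<Rightarrow> 'a \<Rightarrow> bool) \<Rightarrow> 'a set \<Rightarrow> bool" where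
  "connected_graph E V \<longleftrightarrow> V \<noteq> {} \<and> (\<forall>x\<in>V. \<forall>y\<in>V. \<exists>n. walk E V n x y)"

definition delta_z :: "('a \<Rightarrow> 'a \<Rightarrow> bool) \<Rightarrow> 'a set \<Rightarrow> 'a \<Rightarrow> 'a \<Rightarrow> 'a \<Rightarrow> nat" where
  "delta_z E V z x y = nat \<bar>int (gdist E V x z) - int (gdist E V y z)\<bar>"

definition delta_S :: "('a \<Rightarrow> 'a \<Rightarrow> bool) \<Rightarrow> 'a set \<Rightarrow> 'a set \<Rightarrow> 'a \<Rightarrow> 'a \<Rightarrow> nat" where
  "delta_S E V S x y = (\<Sum>z\<in>S. delta_z E V z x y)"

definition weak_k_resolving :: "('a \<Rightarrow> 'a \<Rightarrow> bool) \<Rightarrow> 'a set \<Rightarrow> nat \<Rightarrow> 'a set \<Rightarrow> bool" where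
  "weak_k_resolving E V k S \<longleftrightarrow> S \<subseteq> V \<and>
     (\<forall>x\<in>V. \<forall>y\<in>V. x \<noteq> y \<longrightarrow> delta_S E V S x y \<ge> k)"

text \<open>Weak k-metric dimension: minimum cardinality of a weak k-resolving set
  (graphs here are finite, so subsets are finite).\<close>
definition wdim :: "nat \<Rightarrow> ('a \<Rightarrow> 'a \<Rightarrow> bool) \<Rightarrow> 'a set \<Rightarrow> nat" where
  "wdim k E V = (LEAST m. \<exists>S. weak_k_resolving E V k S \<and> card S = m)"

definition KnKn_V :: "nat \<Rightarrow> (nat \<times> nat) set" where
  "KnKn_V n = {1..n} \<times> {1..n}"

definition KnKn_E :: "nat \<times> nat \<Rightarrow> nat \<times> nat \<Rightarrow> bool" where
  "KnKn_E p q \<longleftrightarrow> fst p \<noteq> fst q \<and> snd p \<noteq> snd q"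

end

theory Submission
  imports Defs
begin

(*
  For n >= 3, distinct vertices of K_n x K_n are at distance 1 when they differ in both
  coordinates and at distance 2 when they share a line (a row or a column). Hence
  Delta_z(x, y) = 2 only if z is x or y and x, y share a line, and S is weak 2-resolving iff
  every pair x, y is separated either in this way or by two distinct vertices of S that see
  x and y at different distances.

  Lower bound, 3 |S| >= 4 n. If a column (or, by symmetry, a row) misses S, each other
  column contains two vertices of S, so |S| >= 2 (n - 1). Otherwise every line meets S; the
  weights 1/r(p) + 1/c(p), where r(p) and c(p) count the vertices of S on the row and column
  of p, sum to 2 n. A vertex alone on both of its lines forces r + c >= 4 at every other
  vertex, so all weights but one (which is 2) are at most 4/3; without such a vertex
  r + c >= 3 and every weight is at most 3/2.

  Upper bound: give each column q+1..n one vertex so that each row 1..p gets at least two, and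
  symmetrically each row p+1..n one vertex so that each column 1..q gets at least two. Every
  line meets this set and every vertex has a companion on exactly one of its two lines, which
  suffices. With p = (n+1) div 3 and q = n div 3 it has 2 n - p - q = n + ceil(n/3) vertices.
*)

lemma gdist_refl: "x \<in> V \<Longrightarrow> gdist E V x x = 0"
  by (simp add: gdist_def)

lemma gdist_adjacent:
  assumes "x \<in> V" "y \<in> V" "E x y" "x \<noteq> y"
  shows "gdist E V x y = 1"
  unfolding gdist_def
proof (rule Least_equality)
  show "walk E V 1 x y" using assms by auto
  show "1 \<le> m" if "walk E V m x y" for m
    using that assms by (cases m) auto
qed

lemma gdist_common_neighbour:
  assumes "x \<in> V" "y \<in> V" "z \<in> V" "E x z" "E z y" "\<not> E x y" "x \<noteq> y"
  shows "gdist E V x y = 2"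
  unfolding gdist_def
proof (rule Least_equality)
  show "walk E V 2 x y" using assms by (auto simp: numeral_2_eq_2)
  show "2 \<le> m" if "walk E V m x y" for m
  proof (rule ccontr)
    assume "\<not> 2 \<le> m"
    then have "m = 0 \<or> m = 1" by auto
    then show False using that assms by auto
  qed
qed

lemma two_le_sum_nat_iff:
  fixes f :: "'a \<Rightarrow> nat"
  assumes "finite A"
  shows "2 \<le> sum f A \<longleftrightarrow> (\<exists>a\<in>A. 2 \<le> f a) \<or> (\<exists>a\<in>A. \<exists>b\<in>A. a \<noteq> b \<and> f a \<noteq> 0 \<and> f b \<noteq> 0)"
    (is "_ \<longleftrightarrow> ?big \<or> ?two")
proof
  assume sum: "2 \<le> sum f A"
  show "?big \<or> ?two"
  proof (rule ccontr)
    define P where "P = {a\<in>A. f a \<noteq> 0}"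
    assume "\<not> (?big \<or> ?two)"
    then have le1: "\<forall>a\<in>A. f a \<le> 1" and single: "\<forall>a\<in>P. \<forall>b\<in>P. a = b"
      unfolding P_def by (auto simp: not_le less_Suc_eq_le) (metis not_gr0)
    have "sum f A = sum f P"
      unfolding P_def using assms by (intro sum.mono_neutral_right) auto
    also have "\<dots> \<le> card P"
      using le1 sum_mono[of P f "\<lambda>_. 1"] by (simp add: P_def)
    also have "\<dots> \<le> 1"
      using single assms card_le_Suc0_iff_eq[of P] by (simp add: P_def)
    finally show False using sum by simp
  qed
next
  assume "?big \<or> ?two"
  then show "2 \<le> sum f A"
  proof
    assume ?big
    then show ?thesis using member_le_sum[OF _ _ assms, of _ f] by force
  next
    assume ?two
    then obtain a b where ab: "a \<in> A" "b \<in> A" "a \<noteq> b" "f a \<noteq> 0" "f b \<noteq> 0" by blast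
    then have "sum f {a, b} \<le> sum f A" using assms by (intro sum_mono2) auto
    then show ?thesis using ab by simp
  qed
qed

lemma sum_card_fibres:
  assumes "finite S" "finite T"
  shows "(\<Sum>v\<in>T. card {x\<in>S. f x = v}) = card {x\<in>S. f x \<in> T}"
proof -
  have "(\<Sum>v\<in>T. card {x\<in>S. f x = v}) = (\<Sum>v\<in>T. \<Sum>x\<in>{x\<in>{x\<in>S. f x \<in> T}. f x = v}. 1)"
    by (intro sum.cong) (auto intro: arg_cong[where f = card])
  also have "\<dots> = card {x\<in>S. f x \<in> T}"
    using assms by (subst sum.group) auto
  finally show ?thesis .
qed

lemma sum_inverse_card_fibres:
  assumes "finite S"
  shows "(\<Sum>x\<in>S. 1 / real (card {y\<in>S. f y = f x})) = real (card (f ` S))"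
proof -
  have "(\<Sum>x\<in>S. 1 / real (card {y\<in>S. f y = f x}))
      = (\<Sum>v\<in>f ` S. \<Sum>x\<in>{y\<in>S. f y = v}. 1 / real (card {y\<in>S. f y = f x}))"
    by (rule sum.image_gen[OF assms])
  also have "\<dots> = (\<Sum>v\<in>f ` S. 1)"
  proof (rule sum.cong[OF refl])
    fix v assume "v \<in> f ` S"
    then have "card {y\<in>S. f y = v} \<noteq> 0" using assms by auto
    then show "(\<Sum>x\<in>{y\<in>S. f y = v}. 1 / real (card {y\<in>S. f y = f x})) = 1"
      by simp
  qed
  finally show ?thesis by simp
qed

lemma inverse_add_inverse_le:
  fixes r c m :: nat
  assumes "1 \<le> r" "1 \<le> c" "1 \<le> m" "m < r + c"
  shows "1 / real r + 1 / real c \<le> 1 + 1 / real m"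
proof -
  have rc: "r + c \<le> r * c + 1"
    using assms(1,2) by (cases r; cases c) auto
  have pos: "0 < real r * real c" using assms by simp
  have "1 / real r + 1 / real c = (real r + real c) / (real r * real c)"
    using assms by (simp add: field_simps)
  also have "\<dots> \<le> (real r * real c + 1) / (real r * real c)"
    using rc pos by (intro divide_right_mono) (simp_all flip: of_nat_add of_nat_mult)
  also have "\<dots> = 1 + 1 / (real r * real c)"
    using assms by (simp add: add_divide_distrib)
  also have "\<dots> \<le> 1 + 1 / real m"
    using rc assms by (simp add: frac_le flip: of_nat_mult)
  finally show ?thesis .
qed

lemma four_le_card_add:
  assumes "finite A" "finite B" "{x, y, z} \<subseteq> A \<union> B" "x \<noteq> y" "x \<noteq> z" "y \<noteq> z" "z \<in> A \<inter> B"
  shows "4 \<le> card A + card B"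
proof -
  have "card {x, y, z} \<le> card (A \<union> B)" using assms by (intro card_mono) auto
  moreover have "card (A \<inter> B) \<noteq> 0" using assms by auto
  ultimately show ?thesis using card_Un_Int[OF assms(1,2)] assms(4-6) by simp
qed

lemma card_1_imp_eq: "card A = 1 \<Longrightarrow> a \<in> A \<Longrightarrow> b \<in> A \<Longrightarrow> a = b"
  by (metis card_1_singletonE singletonD)

lemma wdim_eqI:
  assumes "weak_k_resolving E V k S" "card S \<le> m"
    and "\<And>T. weak_k_resolving E V k T \<Longrightarrow> m \<le> card T"
  shows "wdim k E V = m"
  unfolding wdim_def
proof (rule Least_equality)
  show "\<exists>S. weak_k_resolving E V k S \<and> card S = m"
    using assms by (metis le_antisym)
qed (use assms in blast)

lemma ex_in_atLeastAtMost_avoiding: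
  fixes u v :: nat
  assumes "3 \<le> n"
  shows "\<exists>a\<in>{1..n}. a \<noteq> u \<and> a \<noteq> v"
proof -
  have "{1, 2, 3} \<subseteq> {1..n}" using assms by auto
  moreover have "\<exists>a\<in>{1, 2, 3}. a \<noteq> u \<and> a \<noteq> v" by auto
  ultimately show ?thesis by blast
qed

definition KnKn_dist :: "nat \<times> nat \<Rightarrow> nat \<times> nat \<Rightarrow> nat" where
  "KnKn_dist x y = (if x = y then 0 else if KnKn_E x y then 1 else 2)"

lemma gdist_KnKn:
  assumes "3 \<le> n" "x \<in> KnKn_V n" "y \<in> KnKn_V n"
  shows "gdist KnKn_E (KnKn_V n) x y = KnKn_dist x y"
proof -
  obtain a where a: "a \<in> {1..n}" "a \<noteq> fst x" "a \<noteq> fst y"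
    using ex_in_atLeastAtMost_avoiding[OF assms(1)] by blast
  obtain b where b: "b \<in> {1..n}" "b \<noteq> snd x" "b \<noteq> snd y"
    using ex_in_atLeastAtMost_avoiding[OF assms(1)] by blast
  have "(a, b) \<in> KnKn_V n" "KnKn_E x (a, b)" "KnKn_E (a, b) y"
    using a b by (auto simp: KnKn_V_def KnKn_E_def)
  then show ?thesis
    using assms gdist_refl gdist_adjacent gdist_common_neighbour unfolding KnKn_dist_def by metis
qed

lemma delta_S_KnKn:
  assumes "3 \<le> n" "S \<subseteq> KnKn_V n" "x \<in> KnKn_V n" "y \<in> KnKn_V n"
  shows "delta_S KnKn_E (KnKn_V n) S x y = (\<Sum>z\<in>S. nat \<bar>int (KnKn_dist x z) - int (KnKn_dist y z)\<bar>)"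
  unfolding delta_S_def delta_z_def using assms by (intro sum.cong) (auto simp: gdist_KnKn)

lemma KnKn_dist_swap: "KnKn_dist (prod.swap x) (prod.swap y) = KnKn_dist x y"
  by (auto simp: KnKn_dist_def KnKn_E_def prod_eq_iff)

lemma KnKn_dist_distinguishes_same_row:
  assumes "j \<noteq> j'"
  shows "KnKn_dist (i, j) z \<noteq> KnKn_dist (i, j') z \<longleftrightarrow> snd z \<in> {j, j'}"
  using assms by (cases z) (auto simp: KnKn_dist_def KnKn_E_def)

lemma KnKn_dist_distinguishes_same_col:
  assumes "i \<noteq> i'"
  shows "KnKn_dist (i, j) z \<noteq> KnKn_dist (i', j) z \<longleftrightarrow> fst z \<in> {i, i'}"
  using assms by (cases z) (auto simp: KnKn_dist_def KnKn_E_def)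

lemma KnKn_dist_distinguishes_adjacent:
  assumes "i \<noteq> i'" "j \<noteq> j'"
  shows "KnKn_dist (i, j) z \<noteq> KnKn_dist (i', j') z \<longleftrightarrow>
    (fst z \<in> {i, i'} \<or> snd z \<in> {j, j'}) \<and> z \<noteq> (i, j') \<and> z \<noteq> (i', j)"
  using assms by (cases z) (auto simp: KnKn_dist_def KnKn_E_def)

lemma two_le_KnKn_dist_diff_iff:
  assumes "x \<noteq> y"
  shows "2 \<le> nat \<bar>int (KnKn_dist x z) - int (KnKn_dist y z)\<bar> \<longleftrightarrow> (z = x \<or> z = y) \<and> \<not> KnKn_E x y"
  using assms by (auto simp: KnKn_dist_def KnKn_E_def)

definition KnKn_resolves :: "(nat \<times> nat) set \<Rightarrow> nat \<times> nat \<Rightarrow> nat \<times> nat \<Rightarrow> bool" where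
  "KnKn_resolves S x y \<longleftrightarrow> (\<not> KnKn_E x y \<and> (x \<in> S \<or> y \<in> S)) \<or>
     (\<exists>z\<in>S. \<exists>z'\<in>S. z \<noteq> z' \<and> KnKn_dist x z \<noteq> KnKn_dist y z \<and> KnKn_dist x z' \<noteq> KnKn_dist y z')"

lemma weak_2_resolving_KnKn_iff:
  assumes "3 \<le> n"
  shows "weak_k_resolving KnKn_E (KnKn_V n) 2 S \<longleftrightarrow>
    S \<subseteq> KnKn_V n \<and> (\<forall>x\<in>KnKn_V n. \<forall>y\<in>KnKn_V n. x \<noteq> y \<longrightarrow> KnKn_resolves S x y)"
proof -
  have "2 \<le> delta_S KnKn_E (KnKn_V n) S x y \<longleftrightarrow> KnKn_resolves S x y"
    if "S \<subseteq> KnKn_V n" "x \<in> KnKn_V n" "y \<in> KnKn_V n" "x \<noteq> y" for x y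
  proof -
    have "finite S" using that(1) finite_subset by (auto simp: KnKn_V_def)
    then show ?thesis
      unfolding delta_S_KnKn[OF assms that(1-3)] two_le_sum_nat_iff[OF \<open>finite S\<close>]
        two_le_KnKn_dist_diff_iff[OF \<open>x \<noteq> y\<close>] KnKn_resolves_def
      by auto
  qed
  then show ?thesis unfolding weak_k_resolving_def by blast
qed

lemma KnKn_resolves_outsideD:
  "KnKn_resolves S x y \<Longrightarrow> x \<notin> S \<Longrightarrow> y \<notin> S \<Longrightarrow>
    \<exists>z\<in>S. \<exists>z'\<in>S. z \<noteq> z' \<and> KnKn_dist x z \<noteq> KnKn_dist y z \<and> KnKn_dist x z' \<noteq> KnKn_dist y z'"
  by (simp add: KnKn_resolves_def)

lemma KnKn_V_swap: "prod.swap x \<in> KnKn_V n \<longleftrightarrow> x \<in> KnKn_V n"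
  by (cases x) (auto simp: KnKn_V_def)

lemma KnKn_resolves_swap:
  "KnKn_resolves (prod.swap ` S) (prod.swap x) (prod.swap y) \<longleftrightarrow> KnKn_resolves S x y"
proof -
  have "KnKn_E (prod.swap x) (prod.swap y) \<longleftrightarrow> KnKn_E x y"
    by (auto simp: KnKn_E_def)
  moreover have "prod.swap z = prod.swap z' \<longleftrightarrow> z = z'" for z z' :: "nat \<times> nat"
    by (metis swap_swap)
  ultimately show ?thesis
    unfolding KnKn_resolves_def by (simp add: KnKn_dist_swap inj_image_mem_iff)
qed

lemma weak_2_resolving_KnKn_swap:
  assumes "3 \<le> n" "weak_k_resolving KnKn_E (KnKn_V n) 2 S"
  shows "weak_k_resolving KnKn_E (KnKn_V n) 2 (prod.swap ` S)"
  unfolding weak_2_resolving_KnKn_iff[OF assms(1)]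
proof (intro conjI ballI impI)
  have S: "S \<subseteq> KnKn_V n" "\<forall>x\<in>KnKn_V n. \<forall>y\<in>KnKn_V n. x \<noteq> y \<longrightarrow> KnKn_resolves S x y"
    using assms unfolding weak_2_resolving_KnKn_iff[OF assms(1)] by auto
  then show "prod.swap ` S \<subseteq> KnKn_V n" using KnKn_V_swap by blast
  fix x y assume "x \<in> KnKn_V n" "y \<in> KnKn_V n" "x \<noteq> y"
  then have "KnKn_resolves S (prod.swap x) (prod.swap y)"
    using S(2) KnKn_V_swap by (metis swap_swap)
  then show "KnKn_resolves (prod.swap ` S) x y"
    using KnKn_resolves_swap by (metis swap_swap)
qed

lemma KnKn_resolves_collinear:
  assumes rows: "\<And>i. i \<in> {1..n} \<Longrightarrow> \<exists>j. (i, j) \<in> S"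
    and cols: "\<And>j. j \<in> {1..n} \<Longrightarrow> \<exists>i. (i, j) \<in> S"
    and "x \<in> KnKn_V n" "y \<in> KnKn_V n" "x \<noteq> y" "\<not> KnKn_E x y"
  shows "KnKn_resolves S x y"
proof (cases "x \<in> S \<or> y \<in> S")
  case True
  then show ?thesis using assms by (simp add: KnKn_resolves_def)
next
  case False
  obtain i j i' j' where xy: "x = (i, j)" "y = (i', j')" by fastforce
  have ij: "i \<in> {1..n}" "j \<in> {1..n}" "i' \<in> {1..n}" "j' \<in> {1..n}"
    using assms xy by (auto simp: KnKn_V_def)
  consider "i = i'" "j \<noteq> j'" | "j = j'" "i \<noteq> i'" using assms xy by (auto simp: KnKn_E_def)
  then show ?thesis
  proof cases
    case 1
    obtain a b where ab: "(a, j) \<in> S" "(b, j') \<in> S" using cols ij by blast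
    moreover have "KnKn_dist x (a, j) \<noteq> KnKn_dist y (a, j)" "KnKn_dist x (b, j') \<noteq> KnKn_dist y (b, j')"
      using 1 xy by (simp_all add: KnKn_dist_distinguishes_same_row)
    moreover have "(a, j) \<noteq> (b, j')" using 1 by simp
    ultimately show ?thesis unfolding KnKn_resolves_def by blast
  next
    case 2
    obtain a b where "(i, a) \<in> S" "(i', b) \<in> S" using rows ij by blast
    moreover have "KnKn_dist x (i, a) \<noteq> KnKn_dist y (i, a)" "KnKn_dist x (i', b) \<noteq> KnKn_dist y (i', b)"
      using 2 xy by (simp_all add: KnKn_dist_distinguishes_same_col)
    moreover have "(i, a) \<noteq> (i', b)" using 2 by simp
    ultimately show ?thesis unfolding KnKn_resolves_def by blast
  qed
qed

lemma KnKn_resolves_adjacent: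
  assumes rows: "\<And>i. i \<in> {1..n} \<Longrightarrow> \<exists>j. (i, j) \<in> S"
    and cols: "\<And>j. j \<in> {1..n} \<Longrightarrow> \<exists>i. (i, j) \<in> S"
    and mate: "\<And>i j. (i, j) \<in> S \<Longrightarrow> (\<exists>b\<noteq>j. (i, b) \<in> S) \<or> (\<exists>a\<noteq>i. (a, j) \<in> S)"
    and no_cross: "\<And>i j a b. (i, j) \<in> S \<Longrightarrow> (i, b) \<in> S \<Longrightarrow> (a, j) \<in> S \<Longrightarrow> b = j \<or> a = i"
    and ij: "i \<in> {1..n}" "j \<in> {1..n}" "i' \<in> {1..n}" "j' \<in> {1..n}" and ne: "i \<noteq> i'" "j \<noteq> j'"
  shows "KnKn_resolves S (i, j) (i', j')"
proof -
  let ?D = "\<lambda>z. (fst z \<in> {i, i'} \<or> snd z \<in> {j, j'}) \<and> z \<noteq> (i, j') \<and> z \<noteq> (i', j)"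
  have "\<exists>z\<in>S. \<exists>z'\<in>S. z \<noteq> z' \<and> ?D z \<and> ?D z'"
  proof (cases "(i, j') \<in> S \<and> (i', j) \<in> S")
    case corners: True
    have "\<exists>u\<in>S. u \<noteq> (i, j') \<and> (fst u = i \<or> snd u = j')"
      using mate[of i j'] corners by auto
    then obtain u where u: "u \<in> S" "u \<noteq> (i, j')" "fst u = i \<or> snd u = j'" by blast
    have "\<exists>v\<in>S. v \<noteq> (i', j) \<and> (fst v = i' \<or> snd v = j)"
      using mate[of i' j] corners by auto
    then obtain v where v: "v \<in> S" "v \<noteq> (i', j)" "fst v = i' \<or> snd v = j" by blast
    have "u \<noteq> v" \<comment> \<open>else (i, j) or (i', j') is in S with companions on both lines\<close>
    proof
      assume "u = v"
      then have "u = (i, j) \<or> u = (i', j')" using u v ne by (auto simp: prod_eq_iff)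
      moreover have "(i, j) \<notin> S" using no_cross[of i j j' i'] corners ne by blast
      moreover have "(i', j') \<notin> S" using no_cross[of i' j' j i] corners ne by blast
      ultimately show False using u by blast
    qed
    moreover have "?D u" "?D v" using u v ne by auto
    ultimately show ?thesis using u v by blast
  next
    case False
    then consider "(i, j') \<notin> S" | "(i', j) \<notin> S" by blast
    then show ?thesis
    proof cases
      case 1
      obtain a b where "(i, b) \<in> S" "(a, j') \<in> S" using rows cols ij by blast
      moreover from this have "?D (i, b)" "?D (a, j')" "(i, b) \<noteq> (a, j')" using 1 ne by auto
      ultimately show ?thesis by blast
    next
      case 2
      obtain a b where "(i', b) \<in> S" "(a, j) \<in> S" using rows cols ij by blast
      moreover from this have "?D (i', b)" "?D (a, j)" "(i', b) \<noteq> (a, j)" using 2 ne by auto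
      ultimately show ?thesis by blast
    qed
  qed
  then show ?thesis
    using ne by (simp add: KnKn_resolves_def KnKn_dist_distinguishes_adjacent)
qed

lemma weak_2_resolving_KnKn_if_lines:
  assumes "3 \<le> n" "S \<subseteq> KnKn_V n"
    and rows: "\<And>i. i \<in> {1..n} \<Longrightarrow> \<exists>j. (i, j) \<in> S"
    and cols: "\<And>j. j \<in> {1..n} \<Longrightarrow> \<exists>i. (i, j) \<in> S"
    and mate: "\<And>i j. (i, j) \<in> S \<Longrightarrow> (\<exists>b\<noteq>j. (i, b) \<in> S) \<or> (\<exists>a\<noteq>i. (a, j) \<in> S)"
    and no_cross: "\<And>i j a b. (i, j) \<in> S \<Longrightarrow> (i, b) \<in> S \<Longrightarrow> (a, j) \<in> S \<Longrightarrow> b = j \<or> a = i"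
  shows "weak_k_resolving KnKn_E (KnKn_V n) 2 S"
  unfolding weak_2_resolving_KnKn_iff[OF assms(1)]
proof (intro conjI ballI impI)
  fix x y assume xy: "x \<in> KnKn_V n" "y \<in> KnKn_V n" "x \<noteq> y"
  show "KnKn_resolves S x y"
  proof (cases "KnKn_E x y")
    case True
    obtain i j i' j' where "x = (i, j)" "y = (i', j')" by fastforce
    then show ?thesis
      using xy True
      by (auto simp: KnKn_V_def KnKn_E_def intro!: KnKn_resolves_adjacent[OF rows cols mate no_cross])
  next
    case False
    then show ?thesis using KnKn_resolves_collinear[OF rows cols] xy by blast
  qed
qed (fact assms(2))

(* Column j in (q, n] gets its vertex in row ceil((j - q) / 2), capped at p. *)
definition comb :: "nat \<Rightarrow> nat \<Rightarrow> nat \<Rightarrow> (nat \<times> nat) set" where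
  "comb p q n = (\<lambda>j. (min p ((j - q + 1) div 2), j)) ` {q<..n}"

lemma mem_comb_iff: "(a, b) \<in> comb p q n \<longleftrightarrow> q < b \<and> b \<le> n \<and> a = min p ((b - q + 1) div 2)"
  unfolding comb_def by auto

lemma comb_bounds: "1 \<le> p \<Longrightarrow> (a, b) \<in> comb p q n \<Longrightarrow> 1 \<le> a \<and> a \<le> p \<and> q < b \<and> b \<le> n"
  by (auto simp: mem_comb_iff)

lemma comb_unique: "(a, b) \<in> comb p q n \<Longrightarrow> (a', b) \<in> comb p q n \<Longrightarrow> a = a'"
  by (simp add: mem_comb_iff)

lemma comb_row_two_points:
  assumes "q + 2 * p \<le> n" "c \<in> {1..p}"
  shows "(c, q + 2 * c - 1) \<in> comb p q n" "(c, q + 2 * c) \<in> comb p q n"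
  using assms by (auto simp: mem_comb_iff)

lemma card_comb: "card (comb p q n) \<le> n - q"
  unfolding comb_def using card_image_le[of "{q<..n}"] by simp

definition two_combs :: "nat \<Rightarrow> nat \<Rightarrow> nat \<Rightarrow> (nat \<times> nat) set" where
  "two_combs p q n = comb p q n \<union> prod.swap ` comb q p n"

lemma card_two_combs: "card (two_combs p q n) \<le> (n - q) + (n - p)"
proof -
  have "card (two_combs p q n) \<le> card (comb p q n) + card (prod.swap ` comb q p n)"
    unfolding two_combs_def by (rule card_Un_le)
  also have "\<dots> \<le> card (comb p q n) + card (comb q p n)"
    by (simp add: card_image)
  also have "\<dots> \<le> (n - q) + (n - p)"
    by (intro add_mono card_comb)
  finally show ?thesis .
qed

lemma mem_two_combs_iff: "(a, b) \<in> two_combs p q n \<longleftrightarrow> (a, b) \<in> comb p q n \<or> (b, a) \<in> comb q p n"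
  by (simp add: two_combs_def)

lemma mem_two_combs_swap: "(a, b) \<in> two_combs p q n \<longleftrightarrow> (b, a) \<in> two_combs q p n"
  by (auto simp: mem_two_combs_iff)

lemma two_combs_subset_KnKn_V:
  assumes "1 \<le> p" "1 \<le> q" "p \<le> n" "q \<le> n"
  shows "two_combs p q n \<subseteq> KnKn_V n"
proof clarify
  fix a b assume "(a, b) \<in> two_combs p q n"
  then show "(a, b) \<in> KnKn_V n"
    unfolding mem_two_combs_iff using comb_bounds[of p a b q n] comb_bounds[of q b a p n] assms
    by (auto simp: KnKn_V_def)
qed

lemma two_combs_meets_row:
  assumes "q + 2 * p \<le> n" "i \<in> {1..n}"
  shows "\<exists>j. (i, j) \<in> two_combs p q n"
proof (cases "i \<le> p")
  case True
  then show ?thesis using comb_row_two_points(1)[OF assms(1)] assms(2) by (auto simp: mem_two_combs_iff)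
next
  case False
  then have "(min q ((i - p + 1) div 2), i) \<in> comb q p n" using assms(2) by (simp add: mem_comb_iff)
  then show ?thesis by (auto simp: mem_two_combs_iff)
qed

lemma comb_row_partner:
  assumes "1 \<le> p" "q + 2 * p \<le> n" "(i, j) \<in> comb p q n"
  shows "\<exists>b\<noteq>j. (i, b) \<in> comb p q n"
proof -
  have "i \<in> {1..p}" using comb_bounds[OF assms(1,3)] by simp
  then have "(i, q + 2 * i - 1) \<in> comb p q n" "(i, q + 2 * i) \<in> comb p q n" "q + 2 * i - 1 \<noteq> q + 2 * i"
    using comb_row_two_points[OF assms(2)] by auto
  then show ?thesis by metis
qed

lemma two_combs_partner:
  assumes "1 \<le> p" "1 \<le> q" "q + 2 * p \<le> n" "p + 2 * q \<le> n" "(i, j) \<in> two_combs p q n"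
  shows "(\<exists>b\<noteq>j. (i, b) \<in> two_combs p q n) \<or> (\<exists>a\<noteq>i. (a, j) \<in> two_combs p q n)"
  using assms(5)[unfolded mem_two_combs_iff] comb_row_partner[OF assms(1,3), of i j]
    comb_row_partner[OF assms(2,4), of j i]
  by (auto simp: mem_two_combs_iff)

lemma two_combs_no_cross:
  assumes "1 \<le> p" "1 \<le> q"
    and ij: "(i, j) \<in> two_combs p q n" and ib: "(i, b) \<in> two_combs p q n" and aj: "(a, j) \<in> two_combs p q n"
  shows "b = j \<or> a = i"
proof -
  note left = comb_bounds[OF assms(1), of _ _ q n] and right = comb_bounds[OF assms(2), of _ _ p n]
  consider "(i, j) \<in> comb p q n" | "(j, i) \<in> comb q p n" using ij[unfolded mem_two_combs_iff] by blast
  then show ?thesis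
  proof cases
    case 1
    have "(j, a) \<notin> comb q p n" using left[OF 1] right[of j a] by auto
    then have "(a, j) \<in> comb p q n" using aj[unfolded mem_two_combs_iff] by blast
    then show ?thesis using 1 comb_unique by blast
  next
    case 2
    have "(i, b) \<notin> comb p q n" using right[OF 2] left[of i b] by auto
    then have "(b, i) \<in> comb q p n" using ib[unfolded mem_two_combs_iff] by blast
    then show ?thesis using 2 comb_unique by blast
  qed
qed

lemma two_combs_weak_2_resolving:
  assumes "1 \<le> p" "1 \<le> q" "q + 2 * p \<le> n" "p + 2 * q \<le> n"
  shows "weak_k_resolving KnKn_E (KnKn_V n) 2 (two_combs p q n)"
proof (rule weak_2_resolving_KnKn_if_lines)
  show "3 \<le> n" using assms by simp
  show "two_combs p q n \<subseteq> KnKn_V n" using assms by (intro two_combs_subset_KnKn_V) auto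
  show "\<exists>j. (i, j) \<in> two_combs p q n" if "i \<in> {1..n}" for i
    using two_combs_meets_row[OF assms(3) that] .
  show "\<exists>i. (i, j) \<in> two_combs p q n" if "j \<in> {1..n}" for j
    using two_combs_meets_row[OF assms(4) that] by (simp add: mem_two_combs_swap[of _ j])
qed (use assms two_combs_partner two_combs_no_cross in blast)+

lemma KnKn_col_card_ge_two:
  assumes n: "3 \<le> n" and S: "weak_k_resolving KnKn_E (KnKn_V n) 2 S"
    and j: "j \<in> {1..n}" "\<forall>p\<in>S. snd p \<noteq> j" and j': "j' \<in> {1..n}" "j' \<noteq> j"
  shows "2 \<le> card {p\<in>S. snd p = j'}"
proof (rule ccontr)
  let ?C = "{p\<in>S. snd p = j'}"
  assume small: "\<not> 2 \<le> card ?C"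
  have sub: "S \<subseteq> KnKn_V n" and res: "\<forall>x\<in>KnKn_V n. \<forall>y\<in>KnKn_V n. x \<noteq> y \<longrightarrow> KnKn_resolves S x y"
    using S unfolding weak_2_resolving_KnKn_iff[OF n] by auto
  have fin: "finite ?C" using finite_subset[OF sub] by (simp add: KnKn_V_def)
  have two_le: "2 \<le> card ?C" if "z \<in> ?C" "z' \<in> ?C" "z \<noteq> z'" for z z'
    using card_mono[OF fin, of "{z, z'}"] that by simp
  have "(1, j') \<notin> S \<or> (2, j') \<notin> S" using two_le[of "(1, j')" "(2, j')"] small j' by auto
  then obtain i where "i \<in> {1, 2}" "(i, j') \<notin> S" by blast
  then have i: "i \<in> {1..n}" "(i, j') \<notin> S" using n by auto
  have "KnKn_resolves S (i, j) (i, j')"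
    by (rule res[rule_format]) (use i j j' in \<open>auto simp: KnKn_V_def\<close>)
  moreover have "(i, j) \<notin> S" using j by auto
  ultimately obtain z z' where "z \<in> S" "z' \<in> S" "z \<noteq> z'" "snd z \<in> {j, j'}" "snd z' \<in> {j, j'}"
    using i KnKn_resolves_outsideD KnKn_dist_distinguishes_same_row[OF j'(2)[symmetric]] by metis
  then have "z \<in> ?C" "z' \<in> ?C" "z \<noteq> z'" using j by auto
  then show False using two_le small by blast
qed

lemma KnKn_card_ge_of_empty_col:
  assumes n: "3 \<le> n" and S: "weak_k_resolving KnKn_E (KnKn_V n) 2 S"
    and j: "j \<in> {1..n}" "\<forall>p\<in>S. snd p \<noteq> j"
  shows "2 * (n - 1) \<le> card S"
proof -
  have fin: "finite S"
    using S finite_subset by (auto simp: weak_k_resolving_def KnKn_V_def)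
  have "2 * (n - 1) = (\<Sum>j'\<in>{1..n} - {j}. 2)" using j by simp
  also have "\<dots> \<le> (\<Sum>j'\<in>{1..n} - {j}. card {p\<in>S. snd p = j'})"
    using KnKn_col_card_ge_two[OF n S j] by (intro sum_mono) auto
  also have "\<dots> = card {p\<in>S. snd p \<in> {1..n} - {j}}"
    using fin by (intro sum_card_fibres) auto
  also have "\<dots> \<le> card S"
    using fin by (intro card_mono) auto
  finally show ?thesis .
qed

lemma KnKn_degrees_beside_isolated:
  assumes n: "3 \<le> n" and S: "weak_k_resolving KnKn_E (KnKn_V n) 2 S"
    and p0: "(i0, j0) \<in> S" "card {p\<in>S. fst p = i0} = 1" "card {p\<in>S. snd p = j0} = 1"
    and q: "(i', j) \<in> S" "(i', j) \<noteq> (i0, j0)"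
  shows "4 \<le> card {p\<in>S. fst p = i'} + card {p\<in>S. snd p = j}"
proof -
  let ?A = "{p\<in>S. fst p = i'}" and ?B = "{p\<in>S. snd p = j}"
  have sub: "S \<subseteq> KnKn_V n" and res: "\<forall>x\<in>KnKn_V n. \<forall>y\<in>KnKn_V n. x \<noteq> y \<longrightarrow> KnKn_resolves S x y"
    using S unfolding weak_2_resolving_KnKn_iff[OF n] by auto
  have fin: "finite ?A" "finite ?B" using finite_subset[OF sub] by (simp_all add: KnKn_V_def)
  have row0: "p = (i0, j0)" if "p \<in> S" "fst p = i0" for p
    using card_1_imp_eq[OF p0(2), of p "(i0, j0)"] that p0(1) by simp
  have col0: "p = (i0, j0)" if "p \<in> S" "snd p = j0" for p
    using card_1_imp_eq[OF p0(3), of p "(i0, j0)"] that p0(1) by simp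
  have ne: "i' \<noteq> i0" "j \<noteq> j0" using row0[of "(i', j)"] col0[of "(i', j)"] q by auto
  have "(i0, j) \<in> KnKn_V n" "(i', j0) \<in> KnKn_V n"
    using sub p0(1) q(1) by (auto simp: KnKn_V_def)
  then have "KnKn_resolves S (i0, j) (i', j0)"
    using res ne by auto
  moreover have "(i0, j) \<notin> S" using row0[of "(i0, j)"] ne by auto
  moreover have "(i', j0) \<notin> S" using col0[of "(i', j0)"] ne by auto
  ultimately have "\<exists>z\<in>S. \<exists>z'\<in>S. z \<noteq> z' \<and> KnKn_dist (i0, j) z \<noteq> KnKn_dist (i', j0) z
      \<and> KnKn_dist (i0, j) z' \<noteq> KnKn_dist (i', j0) z'"
    by (rule KnKn_resolves_outsideD)
  then obtain z z' where zz: "z \<in> S" "z' \<in> S" "z \<noteq> z'"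
    and "KnKn_dist (i0, j) z \<noteq> KnKn_dist (i', j0) z" "KnKn_dist (i0, j) z' \<noteq> KnKn_dist (i', j0) z'"
    by blast
  then have lines: "(fst w \<in> {i0, i'} \<or> snd w \<in> {j, j0}) \<and> w \<noteq> (i0, j0) \<and> w \<noteq> (i', j)"
    if "w \<in> {z, z'}" for w
    using that by (auto simp: KnKn_dist_distinguishes_adjacent[OF ne(1)[symmetric] ne(2)])
  have in_lines: "w \<in> ?A \<union> ?B \<and> w \<noteq> (i', j)" if "w \<in> {z, z'}" for w
  proof -
    have "w \<in> S" using that zz by auto
    then show ?thesis using lines[OF that] row0[of w] col0[of w] by blast
  qed
  have "{z, z', (i', j)} \<subseteq> ?A \<union> ?B"
    using in_lines[of z] in_lines[of z'] q(1) by auto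
  then show ?thesis
    using four_le_card_add[OF fin] in_lines[of z] in_lines[of z'] zz(3) q(1) by simp
qed

lemma KnKn_card_lower_if_lines_met:
  assumes n: "3 \<le> n" and S: "weak_k_resolving KnKn_E (KnKn_V n) 2 S"
    and rows: "fst ` S = {1..n}" and cols: "snd ` S = {1..n}"
  shows "4 * n \<le> 3 * card S"
proof -
  have fin: "finite S"
    using S finite_subset by (auto simp: weak_k_resolving_def KnKn_V_def)
  define r where "r p = card {q\<in>S. fst q = fst p}" for p :: "nat \<times> nat"
  define c where "c p = card {q\<in>S. snd q = snd p}" for p :: "nat \<times> nat"
  define w where "w p = 1 / real (r p) + 1 / real (c p)" for p
  have sum_w: "(\<Sum>p\<in>S. w p) = 2 * real n"
    unfolding w_def r_def c_def sum.distrib sum_inverse_card_fibres[OF fin] rows cols by simp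
  have pos: "1 \<le> r p" "1 \<le> c p" if "p \<in> S" for p
    using that fin by (auto simp: r_def c_def Suc_le_eq card_gt_0_iff) (metis prod.collapse)+
  have "4 * real n \<le> 3 * real (card S)"
  proof (cases "\<exists>p0\<in>S. r p0 = 1 \<and> c p0 = 1")
    case True
    then obtain i0 j0 where p0: "(i0, j0) \<in> S" "r (i0, j0) = 1" "c (i0, j0) = 1" by auto
    have "w p \<le> 4 / 3 + (if p = (i0, j0) then 2 / 3 else 0)" if "p \<in> S" for p
    proof (cases "p = (i0, j0)")
      case True
      then show ?thesis using p0 by (simp add: w_def)
    next
      case False
      obtain i' j where p: "p = (i', j)" by fastforce
      have "4 \<le> r p + c p"
        using KnKn_degrees_beside_isolated[OF n S p0(1) _ _ that[unfolded p] False[unfolded p]] p0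
        by (simp add: r_def c_def p)
      then show ?thesis
        using inverse_add_inverse_le[of "r p" "c p" 3] pos[OF that] False by (simp add: w_def)
    qed
    then have "(\<Sum>p\<in>S. w p) \<le> (\<Sum>p\<in>S. 4 / 3 + (if p = (i0, j0) then 2 / 3 else 0))"
      by (rule sum_mono)
    also have "\<dots> = 4 / 3 * real (card S) + 2 / 3"
      using p0(1) fin by (simp add: sum.distrib)
    finally show ?thesis using sum_w n by linarith
  next
    case False
    have "w p \<le> 3 / 2" if "p \<in> S" for p
      using inverse_add_inverse_le[of "r p" "c p" 2] pos[OF that] False that by (force simp: w_def)
    then have "(\<Sum>p\<in>S. w p) \<le> 3 / 2 * real (card S)"
      using sum_mono[of S w "\<lambda>_. 3 / 2"] by simp
    then show ?thesis using sum_w by linarith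
  qed
  then show ?thesis by linarith
qed

lemma KnKn_weak_2_resolving_card_lower:
  assumes n: "3 \<le> n" and S: "weak_k_resolving KnKn_E (KnKn_V n) 2 S"
  shows "4 * n \<le> 3 * card S"
proof -
  have sub: "S \<subseteq> KnKn_V n" using S by (simp add: weak_k_resolving_def)
  consider (empty_col) j where "j \<in> {1..n}" "\<forall>p\<in>S. snd p \<noteq> j"
    | (empty_row) i where "i \<in> {1..n}" "\<forall>p\<in>S. fst p \<noteq> i"
    | (lines_met) "fst ` S = {1..n}" "snd ` S = {1..n}"
  proof -
    have "fst ` S \<subseteq> {1..n}" "snd ` S \<subseteq> {1..n}" using sub by (auto simp: KnKn_V_def)
    then show thesis using that by (metis image_iff subsetI subset_antisym)
  qed
  then show ?thesis
  proof cases
    case empty_col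
    then show ?thesis using KnKn_card_ge_of_empty_col[OF n S] n by fastforce
  next
    case empty_row
    then have "2 * (n - 1) \<le> card (prod.swap ` S)"
      using KnKn_card_ge_of_empty_col[OF n weak_2_resolving_KnKn_swap[OF n S]] by fastforce
    then show ?thesis using n by (simp add: card_image)
  next
    case lines_met
    then show ?thesis using KnKn_card_lower_if_lines_met[OF n S] by blast
  qed
qed

lemma nat_ceiling_third: "nat \<lceil>real n / 3\<rceil> = (n + 2) div 3"
proof -
  have "\<lceil>real n / 3\<rceil> = int ((n + 2) div 3)"
    by (rule ceiling_unique) linarith+
  then show ?thesis by simp
qed

lemma sum_thirds: "n div 3 + (n + 1) div 3 + (n + 2) div 3 = (n :: nat)"
  by presburger

theorem mainTheorem3:
  fixes n :: nat
  assumes "n \<ge> 4"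
  shows "wdim 2 KnKn_E (KnKn_V n) = n + nat \<lceil>real n / 3\<rceil>"
proof (rule wdim_eqI)
  let ?p = "(n + 1) div 3" and ?q = "n div 3"
  show "weak_k_resolving KnKn_E (KnKn_V n) 2 (two_combs ?p ?q n)"
    using assms by (intro two_combs_weak_2_resolving) auto
  show "card (two_combs ?p ?q n) \<le> n + nat \<lceil>real n / 3\<rceil>"
    using card_two_combs[of ?p ?q n] sum_thirds[of n] unfolding nat_ceiling_third by linarith
  show "n + nat \<lceil>real n / 3\<rceil> \<le> card T" if "weak_k_resolving KnKn_E (KnKn_V n) 2 T" for T
    using KnKn_weak_2_resolving_card_lower[OF _ that] assms unfolding nat_ceiling_third by linarith
qed

end
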